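(* Let $w=w_1\cdots w_n$ be a word of length $n\ge 2$ such that $w_i=w_{n-i+1}$ for all $1\le i\le n$, and let $k$ be the maximum number of times any single letter appears in $w$. Then $f(w)=\max\{n,2k\}+2$.
   Context: A word of length $n$ is a sequence $w=w_1w_2\cdots w_n$ of letters (symbols). Let $[n]=\{1,\dots,n\}$. An $n$-grid is a function $G:[n]^2\to\Sigma$, where $\Sigma$ is an arbitrary set of letters. The $i$th row of $G$ contains $w$ if $G(i,j)=w_j$ for all $1\le j\le n$, or $G(i,j)=w_{n-j+1}$ for all $1\le j\le n$. The $j$th column contains $w$ if $G(i,j)=w_i$ for all $i$, or $G(i,j)=w_{n-i+1}$ for all $i$. The main diagonal contains $w$ if $G(i,i)=w_i$ for all $i$ or $G(i,i)=w_{n-i+1}$ for all $i$; the anti-diagonal contains $w$ if $G(i,n-i+1)=w_i$ for all $i$ or $G(i,n-i+1)=w_{n-i+1}$ for all $i$. Let $f(w,G)$ be the number of the $2n+2$ lines ($n$ rows, $n$ columns, $2$ diagonals) of $G$ that contain $w$, and $f(w)=\max_G f(w,G)$ over all $n$-grids $G$. *)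

theory Defs
  imports Main
begin

text \<open>A word w = w_1 ... w_n is a list of length n, with w_i = w ! (i - 1).
  An n-grid is a function G :: nat => nat => 'a; only its values on [n]^2 matter.\<close>

definition row_contains :: "'a list \<Rightarrow> (nat \<Rightarrow> nat \<Rightarrow> 'a) \<Rightarrow> nat \<Rightarrow> bool" where
  "row_contains w G i \<longleftrightarrow>
     (\<forall>j\<in>{1..length w}. G i j = w ! (j - 1)) \<or>
     (\<forall>j\<in>{1..length w}. G i j = w ! (length w - j))"

definition col_contains :: "'a list \<Rightarrow> (nat \<Rightarrow> nat \<Rightarrow> 'a) \<Rightarrow> nat \<Rightarrow> bool" where
  "col_contains w G j \<longleftrightarrow>
     (\<forall>i\<in>{1..length w}. G i j = w ! (i - 1)) \<or>
     (\<forall>i\<in>{1..length w}. G i j = w ! (length w - i))"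

definition diag_contains :: "'a list \<Rightarrow> (nat \<Rightarrow> nat \<Rightarrow> 'a) \<Rightarrow> bool" where
  "diag_contains w G \<longleftrightarrow>
     (\<forall>i\<in>{1..length w}. G i i = w ! (i - 1)) \<or>
     (\<forall>i\<in>{1..length w}. G i i = w ! (length w - i))"

definition antidiag_contains :: "'a list \<Rightarrow> (nat \<Rightarrow> nat \<Rightarrow> 'a) \<Rightarrow> bool" where
  "antidiag_contains w G \<longleftrightarrow>
     (\<forall>i\<in>{1..length w}. G i (length w - i + 1) = w ! (i - 1)) \<or>
     (\<forall>i\<in>{1..length w}. G i (length w - i + 1) = w ! (length w - i))"

definition lines_containing :: "'a list \<Rightarrow> (nat \<Rightarrow> nat \<Rightarrow> 'a) \<Rightarrow> nat" where
  "lines_containing w G =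
     card {i\<in>{1..length w}. row_contains w G i}
   + card {j\<in>{1..length w}. col_contains w G j}
   + (if diag_contains w G then 1 else 0)
   + (if antidiag_contains w G then 1 else 0)"

text \<open>f(w) = max over all grids (letters from the type 'a, which contains all letters of w).\<close>
definition fmax :: "'a list \<Rightarrow> nat" where
  "fmax w = Max (range (lines_containing w))"

end

theory Submission
  imports Defs
begin

text \<open>For a palindrome, a line contains w exactly when it reads w in increasing index order.
  If row i and column j both contain w, their common cell gives w_i = w_j; hence all full
  rows and full columns sit at positions carrying one letter a, so at most count(a) of each
  if both kinds occur, and at most n in total otherwise. The bound is attained by the grid
  whose rows all equal w, and by the grid that copies w into every row and column at a
  position of a most frequent letter a and puts w_i everywhere else in row i; in both,
  the two diagonals contain w as well.\<close>

lemma Ball_atLeastAtMost_1_conv: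
  "(\<forall>i\<in>{1..n::nat}. P (i - 1)) \<longleftrightarrow> (\<forall>k<n. P k)"
proof
  assume H: "\<forall>i\<in>{1..n}. P (i - 1)"
  show "\<forall>k<n. P k"
  proof (intro allI impI)
    fix k assume "k < n"
    then show "P k" using H[rule_format, of "Suc k"] by simp
  qed
next
  assume "\<forall>k<n. P k"
  then show "\<forall>i\<in>{1..n}. P (i - 1)" by auto
qed

lemma rev_nth_eq_nth_reflect:
  "i \<in> {1..length w} \<Longrightarrow> rev w ! (i - 1) = w ! (length w - i)"
  by (cases i) (auto simp: rev_nth)

lemma palindrome_iff_rev_eq:
  "(\<forall>i\<in>{1..length w}. w ! (i - 1) = w ! (length w - i)) \<longleftrightarrow> rev w = w"
proof -
  have "(\<forall>i\<in>{1..length w}. w ! (i - 1) = w ! (length w - i))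
      \<longleftrightarrow> (\<forall>i\<in>{1..length w}. rev w ! (i - 1) = w ! (i - 1))"
    using rev_nth_eq_nth_reflect[of _ w] by auto
  also have "\<dots> \<longleftrightarrow> (\<forall>k<length w. rev w ! k = w ! k)"
    by (rule Ball_atLeastAtMost_1_conv)
  also have "\<dots> \<longleftrightarrow> rev w = w"
    using nth_equalityI[of "rev w" w] by auto
  finally show ?thesis .
qed

lemma row_contains_palindrome:
  assumes "rev w = w"
  shows "row_contains w G i \<longleftrightarrow> (\<forall>j\<in>{1..length w}. G i j = w ! (j - 1))"
  using rev_nth_eq_nth_reflect[of _ w] unfolding row_contains_def assms by auto

lemma col_contains_palindrome:
  assumes "rev w = w"
  shows "col_contains w G j \<longleftrightarrow> (\<forall>i\<in>{1..length w}. G i j = w ! (i - 1))"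
  using rev_nth_eq_nth_reflect[of _ w] unfolding col_contains_def assms by auto

lemma card_positions_eq_count_list:
  "card {i\<in>{1..length w}. w ! (i - 1) = a} = count_list w a"
proof -
  have "{i\<in>{1..length w}. w ! (i - 1) = a} = Suc ` {k. k < length w \<and> w ! k = a}"
  proof (rule set_eqI)
    show "i \<in> {i\<in>{1..length w}. w ! (i - 1) = a} \<longleftrightarrow> i \<in> Suc ` {k. k < length w \<and> w ! k = a}"
      for i by (cases i) auto
  qed
  then have "card {i\<in>{1..length w}. w ! (i - 1) = a} = card {k. k < length w \<and> w ! k = a}"
    by (simp add: card_image)
  also have "\<dots> = count_list w a"
    by (simp add: count_list_eq_length_filter length_filter_conv_card eq_commute)
  finally show ?thesis .
qed

lemma row_col_contains_same_letter:
  assumes "rev w = w" "row_contains w G i" "col_contains w G j"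
    and "i \<in> {1..length w}" "j \<in> {1..length w}"
  shows "w ! (i - 1) = w ! (j - 1)"
proof -
  have "G i j = w ! (j - 1)"
    using assms(2,5) row_contains_palindrome[OF assms(1)] by blast
  moreover have "G i j = w ! (i - 1)"
    using assms(3,4) col_contains_palindrome[OF assms(1)] by blast
  ultimately show ?thesis by simp
qed

lemma card_rows_plus_cols_le:
  assumes pal: "rev w = w" and K: "\<And>a. count_list w a \<le> K"
  shows "card {i\<in>{1..length w}. row_contains w G i} + card {j\<in>{1..length w}. col_contains w G j}
    \<le> max (length w) (2 * K)"
    (is "card ?R + card ?C \<le> _")
proof (cases "?R = {} \<or> ?C = {}")
  case True
  have "card ?R \<le> card {1..length w}" "card ?C \<le> card {1..length w}"
    by (intro card_mono; auto)+
  moreover have "card ?R = 0 \<or> card ?C = 0"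
    using True by (metis card.empty)
  moreover have "card {1..length w} = length w"
    by simp
  ultimately have "card ?R + card ?C \<le> length w"
    by linarith
  then show ?thesis by simp
next
  case False
  then obtain i0 j0 where i0: "i0 \<in> ?R" and j0: "j0 \<in> ?C" by blast
  define a where "a = w ! (i0 - 1)"
  let ?P = "{i\<in>{1..length w}. w ! (i - 1) = a}"
  have "?R \<subseteq> ?P"
    using i0 j0 row_col_contains_same_letter[OF pal] unfolding a_def by fastforce
  moreover have "?C \<subseteq> ?P"
    using i0 row_col_contains_same_letter[OF pal] unfolding a_def by fastforce
  ultimately have "card ?R \<le> count_list w a" "card ?C \<le> count_list w a"
    using card_mono[of ?P] card_positions_eq_count_list[of w a] by auto
  then show ?thesis using K[of a] by simp
qed

lemma lines_containing_palindrome_le: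
  assumes "rev w = w" "\<And>a. count_list w a \<le> K"
  shows "lines_containing w G \<le> max (length w) (2 * K) + 2"
  using card_rows_plus_cols_le[OF assms, of G] unfolding lines_containing_def by simp

lemma lines_containing_rows_grid:
  assumes pal: "rev w = w"
  shows "length w + 2 \<le> lines_containing w (\<lambda>i j. w ! (j - 1))"
proof -
  have "{i\<in>{1..length w}. row_contains w (\<lambda>i j. w ! (j - 1)) i} = {1..length w}"
    using row_contains_palindrome[OF pal] by auto
  moreover have "diag_contains w (\<lambda>i j. w ! (j - 1))"
    by (simp add: diag_contains_def)
  moreover have "antidiag_contains w (\<lambda>i j. w ! (j - 1))"
    using rev_nth_eq_nth_reflect[of _ w] unfolding antidiag_contains_def pal by auto
  ultimately show ?thesis
    unfolding lines_containing_def by simp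
qed

definition cross_grid :: "'a list \<Rightarrow> 'a \<Rightarrow> nat \<Rightarrow> nat \<Rightarrow> 'a" where
  "cross_grid w a i j = (if w ! (i - 1) = a then w ! (j - 1) else w ! (i - 1))"

lemma lines_containing_cross_grid:
  assumes pal: "rev w = w"
  shows "2 * count_list w a + 2 \<le> lines_containing w (cross_grid w a)"
proof -
  let ?P = "{i\<in>{1..length w}. w ! (i - 1) = a}"
  have "?P \<subseteq> {i\<in>{1..length w}. row_contains w (cross_grid w a) i}"
    using row_contains_palindrome[OF pal] by (auto simp: cross_grid_def)
  moreover have "?P \<subseteq> {j\<in>{1..length w}. col_contains w (cross_grid w a) j}"
    using col_contains_palindrome[OF pal] by (auto simp: cross_grid_def)
  ultimately have "count_list w a \<le> card {i\<in>{1..length w}. row_contains w (cross_grid w a) i}"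
      "count_list w a \<le> card {j\<in>{1..length w}. col_contains w (cross_grid w a) j}"
    unfolding card_positions_eq_count_list[symmetric] by (simp_all add: card_mono)
  moreover have "diag_contains w (cross_grid w a)"
    by (simp add: diag_contains_def cross_grid_def)
  moreover have "antidiag_contains w (cross_grid w a)"
    using rev_nth_eq_nth_reflect[of _ w]
    unfolding antidiag_contains_def cross_grid_def pal by auto
  ultimately show ?thesis
    unfolding lines_containing_def by simp
qed

lemma fmax_eqI:
  assumes "\<And>G. lines_containing w G \<le> m" "m \<le> lines_containing w G0"
  shows "fmax w = m"
proof -
  have "range (lines_containing w) \<subseteq> {..m}"
    using assms(1) by auto
  then have "finite (range (lines_containing w))"
    by (rule finite_subset) simp
  moreover have "m = lines_containing w G0"
    using assms by (simp add: order.antisym)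
  ultimately show ?thesis
    unfolding fmax_def using assms(1) by (intro Max_eqI) auto
qed

theorem theorem2:
  fixes w :: "'a list"
  assumes "length w \<ge> 2"
    and "\<forall>i\<in>{1..length w}. w ! (i - 1) = w ! (length w - i)"
  shows "fmax w = max (length w) (2 * Max ((\<lambda>a. count_list w a) ` set w)) + 2"
proof -
  define K where "K = Max ((\<lambda>a. count_list w a) ` set w)"
  have pal: "rev w = w"
    using assms(2) palindrome_iff_rev_eq by blast
  have K_ge: "count_list w a \<le> K" for a
    by (cases "a \<in> set w") (simp_all add: K_def)
  from assms(1) have "K \<in> (\<lambda>a. count_list w a) ` set w"
    unfolding K_def by (intro Max_in) auto
  then obtain a where a: "count_list w a = K" by blast
  have "\<exists>G. max (length w) (2 * K) + 2 \<le> lines_containing w G"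
    using lines_containing_rows_grid[OF pal] lines_containing_cross_grid[OF pal, of a] a
    by (cases "length w \<le> 2 * K") (auto simp: max_def)
  then obtain G0 where "max (length w) (2 * K) + 2 \<le> lines_containing w G0" ..
  then show ?thesis
    unfolding K_def[symmetric] by (rule fmax_eqI[OF lines_containing_palindrome_le[OF pal K_ge]])
qed

end
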